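(* Let $0<s<1$. Define $$J_s(r,\widetilde r)=\frac{r}{\widetilde r}\min\Big\{1,\frac{(3-s)\widetilde r-2}{(1-s)r-2}\Big\}$$ on $$K(s)=\Big[2,\frac{6}{(3-4s)_+}\Big]\times\Big[\max\Big\{1,\frac{6}{7-4s}\Big\},\frac{2}{2-s}\Big].$$ Then $$\sup_{(r,\widetilde r)\in K(s)}J_s(r,\widetilde r)=\begin{cases}\frac{3-s}{1-s}, & \frac12\leq s<1,\\[2pt] \frac{7-4s}{3-4s}, & \frac14\leq s\leq\frac12,\\[2pt] \frac{6}{3-4s}, & 0<s\leq\frac14.\end{cases}$$ Moreover, the supremum is attained in each case: (i) if $0<s\leq\frac14$, at $(r,\widetilde r)=(\frac{6}{3-4s},1)$; (ii) if $\frac14\leq s\leq\frac12$, at $(r,\widetilde r)=(\frac6{3-4s},\frac6{7-4s})$; (iii) if $\frac12\le s<1$, at the points with $\widetilde r=\frac{1-s}{3-s}r$ and $$\frac{6}{7-4s}\cdot\frac{3-s}{1-s}\leq r\leq\begin{cases}\frac{6}{3-4s}, & \frac12\leq s\leq 3-\sqrt6,\\ \frac{2}{2-s}\cdot\frac{3-s}{1-s}, & 3-\sqrt6\leq s<1.\end{cases}$$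
   Context: Here $x_+=\max(x,0)$, with the convention $\frac60=\infty$. *)

theory Defs
  imports Complex_Main
begin

text \<open>J_s(r, rt) = (r/rt) * min{1, ((3-s) rt - 2)/((1-s) r - 2)}.
  A zero denominator (with the numerator positive on K(s)) is read as the
  value +infinity, so the minimum is 1 in that case.\<close>
definition J :: "real \<Rightarrow> real \<Rightarrow> real \<Rightarrow> real" where
  "J s r rt = (r / rt) *
     (if (1 - s) * r - 2 = 0 then 1
      else min 1 (((3 - s) * rt - 2) / ((1 - s) * r - 2)))"

text \<open>K(s) = [2, 6/(3-4s)_+] x [max{1, 6/(7-4s)}, 2/(2-s)], with 6/0 = infinity,
  i.e. the upper bound on r is absent when 3 - 4s <= 0.\<close>
definition K :: "real \<Rightarrow> (real \<times> real) set" where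
  "K s = {(r, rt). 2 \<le> r \<and> (3 - 4 * s > 0 \<longrightarrow> r \<le> 6 / (3 - 4 * s)) \<and>
                   max 1 (6 / (7 - 4 * s)) \<le> rt \<and> rt \<le> 2 / (2 - s)}"

end

theory Submission
  imports Defs
begin

text \<open>Write d = (1-s) r - 2 and n = (3-s) rt - 2 for the denominator and numerator in J.
  When d > 0, the inequality r/rt \<le> (3-s)/(1-s) holds exactly when
  (r/rt)(n/d) \<ge> (3-s)/(1-s), so one of the two candidates in the minimum always stays below
  (3-s)/(1-s); equality holds on the ray (1-s) r = (3-s) rt. For s \<le> 1/2 the box K(s) is
  bounded and the trivial bound J \<le> r/rt \<le> max r / min rt is attained at the corner where
  n \<ge> d > 0. For s \<ge> 1/2 the ray meets K(s) in a segment whose right end is cut off either by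
  r \<le> 6/(3-4s) or by rt \<le> 2/(2-s); which one is active is decided by the sign of
  s^2 - 6s + 3, i.e. by comparing s with 3 - sqrt 6.\<close>

lemma cSUP_eq_attained:
  fixes f :: "'a \<Rightarrow> 'b::conditionally_complete_lattice"
  assumes "q \<in> A" "f q = v" "\<And>p. p \<in> A \<Longrightarrow> f p \<le> v"
  shows "(SUP p\<in>A. f p) = v"
  using assms by (intro cSup_eq_maximum) auto

lemma le_3_minus_sqrt6_iff:
  fixes s :: real
  assumes "s \<le> 3"
  shows "s \<le> 3 - sqrt 6 \<longleftrightarrow> 0 \<le> s\<^sup>2 - 6 * s + 3"
proof -
  have "s \<le> 3 - sqrt 6 \<longleftrightarrow> sqrt 6 \<le> sqrt ((3 - s)\<^sup>2)"
    using assms by (simp; linarith)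
  also have "\<dots> \<longleftrightarrow> 6 \<le> (3 - s)\<^sup>2"
    by (rule real_sqrt_le_iff)
  also have "\<dots> \<longleftrightarrow> 0 \<le> s\<^sup>2 - 6 * s + 3"
    by (simp add: power2_eq_square algebra_simps)
  finally show ?thesis .
qed

lemma three_minus_sqrt6_lt:
  "3 - sqrt 6 < (3/4 :: real)"
proof -
  have "9/4 < sqrt 6"
    by (rule real_less_rsqrt) (simp add: power2_eq_square)
  then show ?thesis
    by simp
qed

lemma r_cap_le_ray_exit_iff:
  fixes s :: real
  assumes "0 < 3 - 4*s" "s < 1"
  shows "6 / (3 - 4*s) \<le> 2 / (2 - s) * ((3 - s) / (1 - s))
      \<longleftrightarrow> 0 \<le> s\<^sup>2 - 6 * s + 3"
proof -
  have "6 / (3 - 4*s) \<le> 2 / (2 - s) * ((3 - s) / (1 - s))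
      \<longleftrightarrow> 6 * ((2 - s) * (1 - s)) \<le> 2 * (3 - s) * (3 - 4*s)"
    using assms by (simp add: divide_le_eq le_divide_eq mult.commute mult.left_commute)
  also have "\<dots> \<longleftrightarrow> 0 \<le> s\<^sup>2 - 6 * s + 3"
    by (auto simp: algebra_simps power2_eq_square)
  finally show ?thesis .
qed

lemma J_le_ratio:
  assumes "0 < r" "0 < rt"
  shows "J s r rt \<le> r / rt"
proof -
  have "(if (1 - s) * r - 2 = 0 then 1
      else min 1 (((3 - s) * rt - 2) / ((1 - s) * r - 2))) \<le> (1::real)"
    by auto
  then show ?thesis
    unfolding J_def using assms by (intro mult_left_le) auto
qed

lemma J_eq_ratio:
  assumes "0 \<le> (1 - s) * r - 2" "(1 - s) * r - 2 \<le> (3 - s) * rt - 2"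
  shows "J s r rt = r / rt"
  using assms unfolding J_def by (auto simp: le_divide_eq)

lemma J_le_over_lower_bound:
  assumes "0 < m" "m \<le> rt" "0 < r" "r \<le> R"
  shows "J s r rt \<le> R / m"
proof -
  have "J s r rt \<le> r / rt"
    using assms by (intro J_le_ratio) auto
  also have "\<dots> \<le> R / m"
    using assms by (intro frac_le) auto
  finally show ?thesis .
qed

lemma J_le_global_bound:
  assumes s: "0 < s" "s < 1" and r: "2 \<le> r" and rt: "1 \<le> rt"
  shows "J s r rt \<le> (3 - s) / (1 - s)"
proof -
  define d where "d = (1 - s) * r - 2"
  define n where "n = (3 - s) * rt - 2"
  have rt_scaled: "3 - s \<le> (3 - s) * rt"
    using s rt mult_left_mono[of 1 rt "3 - s"] by simp
  then have n_pos: "0 < n"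
    using s unfolding n_def by linarith
  have ratio_le_iff: "r / rt \<le> (3 - s) / (1 - s) \<longleftrightarrow> (1 - s) * r \<le> (3 - s) * rt"
    using s rt by (simp add: divide_le_eq le_divide_eq mult.commute)
  have J_min: "J s r rt = (r / rt) * min 1 (n / d)" if "d \<noteq> 0"
    using that unfolding J_def d_def n_def by simp
  consider "d < 0" | "d = 0" | "0 < d" by linarith
  then show ?thesis
  proof cases
    case 1
    then have "n / d < 0"
      using n_pos by (simp add: divide_pos_neg)
    have "J s r rt = (r / rt) * min 1 (n / d)"
      using 1 J_min by simp
    also have "\<dots> = (r / rt) * (n / d)"
      using \<open>n / d < 0\<close> by simp
    also have "\<dots> < 0"
      using \<open>n / d < 0\<close> r rt by (intro mult_pos_neg) auto
    moreover have "0 < (3 - s) / (1 - s)"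
      using s by simp
    ultimately show ?thesis
      by linarith
  next
    case 2
    then have "J s r rt = r / rt" and "(1 - s) * r = 2"
      unfolding J_def d_def by simp_all
    moreover have "2 \<le> (3 - s) * rt"
      using rt_scaled s by linarith
    ultimately show ?thesis
      using ratio_le_iff by simp
  next
    case 3
    have ratio_nonneg: "0 \<le> r / rt"
      using r rt by simp
    have J_eq: "J s r rt = (r / rt) * min 1 (n / d)"
      using 3 J_min by simp
    have J_le: "J s r rt \<le> r / rt" "J s r rt \<le> (r / rt) * (n / d)"
      unfolding J_eq
      by (rule mult_left_le[OF min.cobounded1 ratio_nonneg],
          rule mult_left_mono[OF min.cobounded2 ratio_nonneg])
    show ?thesis
    proof (cases "(1 - s) * r \<le> (3 - s) * rt")
      case True
      then show ?thesis
        using J_le(1) ratio_le_iff by linarith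
    next
      case False
      have "r * n * (1 - s) \<le> (3 - s) * (rt * d)"
        using False unfolding n_def d_def by (simp add: algebra_simps)
      then have "(r / rt) * (n / d) \<le> (3 - s) / (1 - s)"
        using s rt 3 by (simp add: divide_le_eq le_divide_eq mult.commute mult.left_commute)
      then show ?thesis
        using J_le(2) by linarith
    qed
  qed
qed

lemma K_memberD:
  assumes "(r, rt) \<in> K s"
  shows "2 \<le> r" "1 \<le> rt" "6 / (7 - 4 * s) \<le> rt"
    and "0 < 3 - 4 * s \<Longrightarrow> r \<le> 6 / (3 - 4 * s)"
  using assms unfolding K_def by auto

lemma J_corner_small_s:
  assumes "0 < s" "s \<le> 1/4"
  shows "(6 / (3 - 4*s), 1) \<in> K s \<and> J s (6 / (3 - 4*s)) 1 = 6 / (3 - 4*s)"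
proof -
  have pos: "0 < 3 - 4*s"
    using assms by simp
  have "(6 / (3 - 4*s), 1) \<in> K s"
    using assms pos unfolding K_def by (simp add: le_divide_eq divide_le_eq)
  moreover have "(1 - s) * (6 / (3 - 4*s)) - 2 = 2 * s / (3 - 4*s)"
    using pos by (simp add: field_simps)
  moreover have "2 * s \<le> (1 - s) * (3 - 4*s)"
    using assms mult_nonneg_nonneg[of "1/4 - s" "8 - 4*s"] by (simp add: algebra_simps)
  then have "2 * s / (3 - 4*s) \<le> 1 - s"
    using pos by (simp add: divide_le_eq)
  ultimately show ?thesis
    using assms by (simp add: J_eq_ratio)
qed

lemma J_corner_middle_s:
  assumes "1/4 \<le> s" "s \<le> 1/2"
  shows "(6 / (3 - 4*s), 6 / (7 - 4*s)) \<in> K s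
          \<and> J s (6 / (3 - 4*s)) (6 / (7 - 4*s)) = (7 - 4*s) / (3 - 4*s)"
proof -
  have pos: "0 < 3 - 4*s" "0 < 7 - 4*s"
    using assms by auto
  have "(6 / (3 - 4*s), 6 / (7 - 4*s)) \<in> K s"
    using assms pos unfolding K_def by (simp add: le_divide_eq divide_le_eq)
  moreover have "(1 - s) * (6 / (3 - 4*s)) - 2 = 2 * s / (3 - 4*s)"
    using pos by (simp add: field_simps)
  moreover have "(3 - s) * (6 / (7 - 4*s)) - 2 = (4 + 2*s) / (7 - 4*s)"
    using pos by (simp add: field_simps)
  moreover have "2 * s / (3 - 4*s) \<le> (4 + 2*s) / (7 - 4*s)"
    using assms pos by (simp add: divide_le_eq le_divide_eq algebra_simps)
  moreover have "(6 / (3 - 4*s)) / (6 / (7 - 4*s)) = (7 - 4*s) / (3 - 4*s)"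
    using pos by (simp add: field_simps)
  ultimately show ?thesis
    using assms by (simp add: J_eq_ratio)
qed

lemma segment_end_bounds:
  fixes s :: real
  assumes "1/2 \<le> s" "s < 1"
    and "r \<le> (if s \<le> 3 - sqrt 6 then 6 / (3 - 4*s) else 2 / (2 - s) * ((3 - s) / (1 - s)))"
  shows "0 < 3 - 4*s \<Longrightarrow> r \<le> 6 / (3 - 4*s)"
    and "r \<le> 2 / (2 - s) * ((3 - s) / (1 - s))"
  using assms three_minus_sqrt6_lt le_3_minus_sqrt6_iff[of s] r_cap_le_ray_exit_iff[of s]
  by (auto split: if_splits)

lemma J_on_segment:
  assumes s: "1/2 \<le> s" "s < 1"
    and rt: "rt = (1 - s) / (3 - s) * r"
    and lower: "6 / (7 - 4*s) * ((3 - s) / (1 - s)) \<le> r"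
    and upper: "r \<le> (if s \<le> 3 - sqrt 6 then 6 / (3 - 4*s) else 2 / (2 - s) * ((3 - s) / (1 - s)))"
  shows "(r, rt) \<in> K s \<and> J s r rt = (3 - s) / (1 - s)"
proof -
  have pos: "0 < 1 - s" "0 < 3 - s" "0 < 7 - 4*s" "0 < 2 - s"
    using s by auto
  have on_ray: "(3 - s) * rt = (1 - s) * r"
    using rt pos by simp
  have lower_scaled: "6 / (7 - 4*s) * (3 - s) \<le> (1 - s) * r"
    using mult_left_mono[OF lower, of "1 - s"] pos by simp
  have "2 \<le> 6 / (7 - 4*s) * (3 - s)"
    using s pos by (simp add: le_divide_eq)
  with lower_scaled have denominator_ge: "2 \<le> (1 - s) * r"
    by linarith
  then have "0 < (1 - s) * r"
    by linarith
  then have r_pos: "0 < r"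
    using pos by (simp add: zero_less_mult_iff)
  have "(1 - s) * r \<le> r"
    using r_pos s by (simp add: algebra_simps)
  with denominator_ge have r_lower: "2 \<le> r"
    by linarith
  have "(3 - s) * (6 / (7 - 4*s)) \<le> (3 - s) * rt"
    using lower_scaled on_ray by (simp add: mult.commute)
  then have rt_lower: "6 / (7 - 4*s) \<le> rt"
    using pos(2) by (rule mult_left_le_imp_le)
  have "(3 - s) * rt = (1 - s) * r"
    by (rule on_ray)
  also have "\<dots> \<le> (1 - s) * (2 / (2 - s) * ((3 - s) / (1 - s)))"
    using segment_end_bounds(2)[OF s upper] pos by (intro mult_left_mono) auto
  also have "\<dots> = (3 - s) * (2 / (2 - s))"
    using pos by simp
  finally have rt_upper: "rt \<le> 2 / (2 - s)"
    using pos(2) by (rule mult_left_le_imp_le)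
  have "1 \<le> 6 / (7 - 4*s)"
    using s by (simp add: le_divide_eq)
  with r_lower rt_lower rt_upper segment_end_bounds(1)[OF s upper]
  have "(r, rt) \<in> K s"
    unfolding K_def by simp
  moreover have "J s r rt = r / rt"
    using denominator_ge on_ray by (simp add: J_eq_ratio)
  moreover have "r / rt = (3 - s) / (1 - s)"
    using rt r_pos pos by simp
  ultimately show ?thesis
    by simp
qed

lemma segment_nonempty:
  fixes s :: real
  assumes "1/2 \<le> s" "s < 1"
  shows "6 / (7 - 4*s) * ((3 - s) / (1 - s))
    \<le> (if s \<le> 3 - sqrt 6 then 6 / (3 - 4*s) else 2 / (2 - s) * ((3 - s) / (1 - s)))"
proof (cases "s \<le> 3 - sqrt 6")
  case True
  then have pos: "0 < 3 - 4*s"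
    using three_minus_sqrt6_lt by simp
  have "6 * (3 - s) * (3 - 4*s) \<le> 6 * ((7 - 4*s) * (1 - s))"
    using assms by (simp add: algebra_simps)
  then have "6 / (7 - 4*s) * ((3 - s) / (1 - s)) \<le> 6 / (3 - 4*s)"
    using assms pos by (simp add: divide_le_eq le_divide_eq mult.commute mult.left_commute)
  with True show ?thesis
    by simp
next
  case False
  have "6 / (7 - 4*s) \<le> 2 / (2 - s)"
    using assms by (simp add: divide_le_eq le_divide_eq)
  from mult_right_mono[OF this, of "(3 - s) / (1 - s)"] False assms show ?thesis
    by simp
qed

theorem lemma3p3:
  fixes s :: real
  assumes "0 < s" and "s < 1"
  shows "bdd_above ((\<lambda>(r, rt). J s r rt) ` K s)
    \<and> (1/2 \<le> s \<longrightarrow> (SUP p\<in>K s. J s (fst p) (snd p)) = (3 - s) / (1 - s))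
    \<and> (1/4 \<le> s \<and> s \<le> 1/2 \<longrightarrow> (SUP p\<in>K s. J s (fst p) (snd p)) = (7 - 4*s) / (3 - 4*s))
    \<and> (s \<le> 1/4 \<longrightarrow> (SUP p\<in>K s. J s (fst p) (snd p)) = 6 / (3 - 4*s))
    \<and> (s \<le> 1/4 \<longrightarrow> (6 / (3 - 4*s), 1) \<in> K s \<and> J s (6 / (3 - 4*s)) 1 = 6 / (3 - 4*s))
    \<and> (1/4 \<le> s \<and> s \<le> 1/2 \<longrightarrow> (6 / (3 - 4*s), 6 / (7 - 4*s)) \<in> K s
          \<and> J s (6 / (3 - 4*s)) (6 / (7 - 4*s)) = (7 - 4*s) / (3 - 4*s))
    \<and> (1/2 \<le> s \<longrightarrow> (\<forall>r rt. rt = (1 - s) / (3 - s) * r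
          \<and> 6 / (7 - 4*s) * ((3 - s) / (1 - s)) \<le> r
          \<and> r \<le> (if s \<le> 3 - sqrt 6 then 6 / (3 - 4*s) else 2 / (2 - s) * ((3 - s) / (1 - s)))
          \<longrightarrow> (r, rt) \<in> K s \<and> J s r rt = (3 - s) / (1 - s)))"
proof -
  let ?f = "\<lambda>p. J s (fst p) (snd p)"
  have global: "?f p \<le> (3 - s) / (1 - s)" if "p \<in> K s" for p
    using that assms K_memberD[of "fst p" "snd p" s] J_le_global_bound by simp
  have small: "?f p \<le> 6 / (3 - 4*s)" if "p \<in> K s" "s \<le> 1/4" for p
    using that K_memberD[of "fst p" "snd p" s]
      J_le_over_lower_bound[of 1 "snd p" "fst p" "6 / (3 - 4*s)" s] by simp
  have middle: "?f p \<le> (7 - 4*s) / (3 - 4*s)" if "p \<in> K s" "s \<le> 1/2" for p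
    using that K_memberD[of "fst p" "snd p" s]
      J_le_over_lower_bound[of "6 / (7 - 4*s)" "snd p" "fst p" "6 / (3 - 4*s)" s]
    by (simp add: field_simps)
  have "bdd_above ((\<lambda>(r, rt). J s r rt) ` K s)"
    using global by (intro bdd_aboveI) fastforce
  moreover have "(SUP p\<in>K s. ?f p) = (3 - s) / (1 - s)" if "1/2 \<le> s"
    using J_on_segment[OF that assms(2) refl segment_nonempty[OF that assms(2)] order_refl] global
    by (intro cSUP_eq_attained) auto
  moreover have "(SUP p\<in>K s. ?f p) = (7 - 4*s) / (3 - 4*s)" if "1/4 \<le> s" "s \<le> 1/2"
    using J_corner_middle_s[OF that] middle that by (intro cSUP_eq_attained) auto
  moreover have "(SUP p\<in>K s. ?f p) = 6 / (3 - 4*s)" if "s \<le> 1/4"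
    using J_corner_small_s[OF assms(1) that] small that by (intro cSUP_eq_attained) auto
  ultimately show ?thesis
    using assms J_corner_small_s J_corner_middle_s J_on_segment by auto
qed

end
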